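(* With $T^+_{\mathrm{vl}},S^+_{\mathrm{vl}}$ as in the context, for all real $\gamma>0$, $M$, $a$ one has $$(T^+_{\mathrm{vl}})^2-4S^+_{\mathrm{vl}}=\frac{a^2(M+1)^2}{64\gamma^2(\gamma+1)^2}\,H(\gamma,M),$$ where $$\begin{aligned}H(\gamma,M)={}&(\gamma-1)^2\gamma^2M^6+(-2\gamma^4+4\gamma^3-2\gamma^2)M^5+(-5\gamma^4-2\gamma^3+19\gamma^2-12\gamma)M^4\\&+(20\gamma^4-44\gamma^2+24\gamma)M^3+(-13\gamma^4+26\gamma^3+39\gamma^2-24\gamma+36)M^2\\&+(-42\gamma^4-20\gamma^3-50\gamma^2-72\gamma-72)M+(57\gamma^4+26\gamma^3+53\gamma^2+84\gamma+36).\end{aligned}$$ Moreover $H(\gamma,M)>0$ for all $\gamma\in(1,3)$ and all $M\in[-1,1]$.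
   Context: Define, for real $\gamma,M,a$ with $\gamma>0$, $$T^+_{\mathrm{vl}}=\frac{a}{8\gamma(\gamma+1)}\Bigl[9\gamma(\gamma+1)-(\gamma-1)\gamma M^4+2(2\gamma^2+\gamma-3)M^2+12\gamma(\gamma+1)M+6\Bigr],$$ $$S^+_{\mathrm{vl}}=-\frac{a^2(M+1)^3}{32\gamma(\gamma+1)}\Bigl[-3\gamma^2-14\gamma+4(\gamma-1)\gamma M^2+(-9\gamma^2+10\gamma+3)M-3\Bigr].$$ *)

theory Defs
  imports Complex_Main
begin

definition T_vl :: "real \<Rightarrow> real \<Rightarrow> real \<Rightarrow> real" where
  "T_vl \<gamma> M a = a / (8 * \<gamma> * (\<gamma> + 1)) *
     (9 * \<gamma> * (\<gamma> + 1) - (\<gamma> - 1) * \<gamma> * M ^ 4 + 2 * (2 * \<gamma>^2 + \<gamma> - 3) * M ^ 2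
      + 12 * \<gamma> * (\<gamma> + 1) * M + 6)"

definition S_vl :: "real \<Rightarrow> real \<Rightarrow> real \<Rightarrow> real" where
  "S_vl \<gamma> M a = - (a^2 * (M + 1) ^ 3) / (32 * \<gamma> * (\<gamma> + 1)) *
     (- 3 * \<gamma>^2 - 14 * \<gamma> + 4 * (\<gamma> - 1) * \<gamma> * M ^ 2 + (- 9 * \<gamma>^2 + 10 * \<gamma> + 3) * M - 3)"

definition H_vl :: "real \<Rightarrow> real \<Rightarrow> real" where
  "H_vl \<gamma> M =
     (\<gamma> - 1)^2 * \<gamma>^2 * M^6
   + (- 2 * \<gamma>^4 + 4 * \<gamma>^3 - 2 * \<gamma>^2) * M^5
   + (- 5 * \<gamma>^4 - 2 * \<gamma>^3 + 19 * \<gamma>^2 - 12 * \<gamma>) * M^4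
   + (20 * \<gamma>^4 - 44 * \<gamma>^2 + 24 * \<gamma>) * M^3
   + (- 13 * \<gamma>^4 + 26 * \<gamma>^3 + 39 * \<gamma>^2 - 24 * \<gamma> + 36) * M^2
   + (- 42 * \<gamma>^4 - 20 * \<gamma>^3 - 50 * \<gamma>^2 - 72 * \<gamma> - 72) * M
   + (57 * \<gamma>^4 + 26 * \<gamma>^3 + 53 * \<gamma>^2 + 84 * \<gamma> + 36)"

end

theory Submission
  imports Defs
begin

(* The first claim is a polynomial identity after clearing the common denominator
   8 gamma (gamma + 1).  For the second, the affine substitution
   gamma = 1 + 2x = 3 - 2u and M = 1 - 2y = 2v - 1 maps the box onto x, u, y, v >= 0, and in
   these coordinates H(gamma, M) - 64 is a polynomial with nonnegative coefficients. *)

definition T_vl_numerator :: "real \<Rightarrow> real \<Rightarrow> real" where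
  "T_vl_numerator \<gamma> M =
     9 * \<gamma> * (\<gamma> + 1) - (\<gamma> - 1) * \<gamma> * M ^ 4 + 2 * (2 * \<gamma>^2 + \<gamma> - 3) * M ^ 2
     + 12 * \<gamma> * (\<gamma> + 1) * M + 6"

definition S_vl_numerator :: "real \<Rightarrow> real \<Rightarrow> real" where
  "S_vl_numerator \<gamma> M =
     - 3 * \<gamma>^2 - 14 * \<gamma> + 4 * (\<gamma> - 1) * \<gamma> * M ^ 2 + (- 9 * \<gamma>^2 + 10 * \<gamma> + 3) * M - 3"

lemma T_vl_eq: "T_vl \<gamma> M a = a / (8 * \<gamma> * (\<gamma> + 1)) * T_vl_numerator \<gamma> M"
  unfolding T_vl_def T_vl_numerator_def ..

lemma S_vl_eq:
  "S_vl \<gamma> M a = - (a^2 * (M + 1) ^ 3) / (4 * (8 * \<gamma> * (\<gamma> + 1))) * S_vl_numerator \<gamma> M"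
  unfolding S_vl_def S_vl_numerator_def by simp

lemma vl_numerators_identity:
  "(T_vl_numerator \<gamma> M)^2 + (M + 1)^3 * S_vl_numerator \<gamma> M * (8 * \<gamma> * (\<gamma> + 1))
     = (M + 1)^2 * H_vl \<gamma> M"
  unfolding T_vl_numerator_def S_vl_numerator_def H_vl_def by algebra

lemma T_vl_discriminant:
  fixes \<gamma> M a :: real
  assumes "\<gamma> \<noteq> 0" and "\<gamma> \<noteq> -1"
  shows "(T_vl \<gamma> M a)^2 - 4 * S_vl \<gamma> M a
           = a^2 * (M + 1)^2 / (64 * \<gamma>^2 * (\<gamma> + 1)^2) * H_vl \<gamma> M"
proof -
  define D where "D = 8 * \<gamma> * (\<gamma> + 1)"
  have "D \<noteq> 0"
    using assms unfolding D_def by simp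
  then have "(T_vl \<gamma> M a)^2 - 4 * S_vl \<gamma> M a
      = a^2 / D^2 * ((T_vl_numerator \<gamma> M)^2 + (M + 1)^3 * S_vl_numerator \<gamma> M * D)"
    unfolding T_vl_eq S_vl_eq D_def[symmetric] by (simp add: field_simps power2_eq_square)
  also have "\<dots> = a^2 * (M + 1)^2 / D^2 * H_vl \<gamma> M"
    unfolding D_def vl_numerators_identity by simp
  also have "D^2 = 64 * \<gamma>^2 * (\<gamma> + 1)^2"
    unfolding D_def by (simp add: power_mult_distrib)
  finally show ?thesis .
qed

definition H_vl_box_form :: "real \<Rightarrow> real \<Rightarrow> real \<Rightarrow> real \<Rightarrow> real" where
  "H_vl_box_form x u y v =
       u^4 * (256 * y * v^5 + 1536 * y^2 * v^4 + 3584 * y^3 * v^3 + 4096 * y^4 * v^2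
         + 2304 * y^5 * v + 512 * y^6)
     + x * u^3 * (384 * v^6 + 4096 * y * v^5 + 16768 * y^2 * v^4 + 33536 * y^3 * v^3
         + 35200 * y^4 * v^2 + 18688 * y^5 * v + 3968 * y^6)
     + x^2 * u^2 * (1984 * v^6 + 16768 * y * v^5 + 61248 * y^2 * v^4 + 115968 * y^3 * v^3
         + 117568 * y^4 * v^2 + 59776 * y^5 * v + 11968 * y^6)
     + x^3 * u * (3584 * v^6 + 28416 * y * v^5 + 99840 * y^2 * v^4 + 186112 * y^3 * v^3
         + 186624 * y^4 * v^2 + 90624 * y^5 * v + 16640 * y^6)
     + x^4 * (2240 * v^6 + 18048 * y * v^5 + 63552 * y^2 * v^4 + 118528 * y^3 * v^3
         + 118848 * y^4 * v^2 + 54912 * y^5 * v + 9152 * y^6)"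

lemma H_vl_box_form_nonneg:
  assumes "0 \<le> x" "0 \<le> u" "0 \<le> y" "0 \<le> v"
  shows "0 \<le> H_vl_box_form x u y v"
  unfolding H_vl_box_form_def using assms
  by (intro add_nonneg_nonneg mult_nonneg_nonneg zero_le_power; simp)

lemma H_vl_eq_box_form:
  "H_vl \<gamma> M = 64 + H_vl_box_form ((\<gamma> - 1) / 2) ((3 - \<gamma>) / 2) ((1 - M) / 2) ((1 + M) / 2)"
  unfolding H_vl_def H_vl_box_form_def by (simp add: field_simps power_def; algebra)

lemma H_vl_ge_64:
  assumes "1 \<le> \<gamma>" "\<gamma> \<le> 3" "-1 \<le> M" "M \<le> 1"
  shows "64 \<le> H_vl \<gamma> M"
  unfolding H_vl_eq_box_form using assms by (simp add: H_vl_box_form_nonneg)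

theorem mainTheorem6:
  shows "(\<forall>\<gamma> M a :: real. \<gamma> > 0 \<longrightarrow>
           (T_vl \<gamma> M a)^2 - 4 * S_vl \<gamma> M a
             = a^2 * (M + 1)^2 / (64 * \<gamma>^2 * (\<gamma> + 1)^2) * H_vl \<gamma> M)
       \<and> (\<forall>\<gamma> M :: real. 1 < \<gamma> \<and> \<gamma> < 3 \<and> -1 \<le> M \<and> M \<le> 1 \<longrightarrow> H_vl \<gamma> M > 0)"
proof (intro conjI allI impI)
  fix \<gamma> M a :: real
  assume "\<gamma> > 0"
  then show "(T_vl \<gamma> M a)^2 - 4 * S_vl \<gamma> M a
               = a^2 * (M + 1)^2 / (64 * \<gamma>^2 * (\<gamma> + 1)^2) * H_vl \<gamma> M"
    by (intro T_vl_discriminant) auto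
next
  fix \<gamma> M :: real
  assume "1 < \<gamma> \<and> \<gamma> < 3 \<and> -1 \<le> M \<and> M \<le> 1"
  then have "64 \<le> H_vl \<gamma> M"
    by (intro H_vl_ge_64) auto
  then show "H_vl \<gamma> M > 0"
    by simp
qed

end
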